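(* Let $N\ge2$ and ${\bm{p}}\in\Delta_K$ with $p_1\ge\dots\ge p_K>0$. Let $L_N({\bm{p}},{\bm{q}})=\sum_kp_k(1-q_k)^N$, let ${\bm{q}}^*(N)$ be its minimizer over ${\bm{q}}\in\Delta_K$, let $\beta_N>0$ be such that $q_k^*(N)=\max\{0,1-\beta_Np_k^{-1/(N-1)}\}$ for all $k$, and $K_N:=\max\{k:q_k^*(N)\ne0\}$. Then $$L^{\mathrm{same}}({\bm{p}}):=L_N({\bm{p}},{\bm{p}})=\sum_{k=1}^Kp_k(1-p_k)^N,$$ $$L^*({\bm{p}}):=L_N({\bm{p}},{\bm{q}}^*(N))=\sum_{k=K_N+1}^Kp_k+(K_N-1)\beta_N^{N-1}\in\left[\sum_{k=K_N+1}^Kp_k+(K_N-1)p_{K_N+1},\ \sum_{k=K_N+1}^Kp_k+(K_N-1)p_{K_N}\right),$$ with the convention $p_{K+1}=0$.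
   Context: $\Delta_K=\{{\bm{r}}\in\mathbb{R}^K:{\bm{r}}\ge0,\ \sum_kr_k=1\}$. $L_N$ is the expected test loss of the memorization model (error $1$ on task $k$ iff no sample from task $k$ among $N$ i.i.d. training samples from the mixture with proportions ${\bm{q}}$). *)

theory Defs
  imports Complex_Main
begin

text \<open>Probability simplex Delta_K, with vectors represented as functions nat => real
  supported on the index set {1..K} (entries outside {1..K} are zero).\<close>
definition simplex :: "nat \<Rightarrow> (nat \<Rightarrow> real) set" where
  "simplex K = {r. (\<forall>k. 0 \<le> r k) \<and> (\<forall>k. k \<notin> {1..K} \<longrightarrow> r k = 0) \<and> (\<Sum>k=1..K. r k) = 1}"

definition LN :: "nat \<Rightarrow> nat \<Rightarrow> (nat \<Rightarrow> real) \<Rightarrow> (nat \<Rightarrow> real) \<Rightarrow> real" where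
  "LN K N p q = (\<Sum>k=1..K. p k * (1 - q k) ^ N)"

definition last_nonzero :: "nat \<Rightarrow> (nat \<Rightarrow> real) \<Rightarrow> nat" where
  "last_nonzero K q = Max {k\<in>{1..K}. q k \<noteq> 0}"

end

theory Submission
  imports Defs
begin

text \<open>Write \<open>r k = p k powr (-1/(N-1))\<close>, so that \<open>qs k = max 0 (1 - \<beta> * r k)\<close>.
  Since \<open>p\<close> is nonincreasing, so is \<open>qs\<close>, hence its support is an initial segment
  \<open>{1..K_N}\<close>. There \<open>p k * (1 - qs k)^N = \<beta>^N * r k\<close> because \<open>p k * r k^(N-1) = 1\<close>,
  and \<open>\<Sum>qs = 1\<close> gives \<open>\<beta> * (\<Sum>k=1..K_N. r k) = K_N - 1\<close>; together this is the closed
  form of the loss. The bounds hold because \<open>\<beta> * r k < 1\<close> is equivalent to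
  \<open>\<beta>^(N-1) < p k\<close>, which is true for \<open>k = K_N\<close> and false for \<open>k = K_N + 1\<close>.\<close>

lemma powr_neg_root_power:
  fixes x :: real and m :: nat
  assumes "0 < x" "0 < m"
  shows "(x powr (- 1 / real m)) ^ m = 1 / x"
proof -
  have "(x powr (- 1 / real m)) ^ m = x powr (- 1 / real m * real m)"
    using assms(1) by (simp add: powr_realpow[symmetric] powr_powr)
  also have "\<dots> = 1 / x"
    using assms by (simp add: powr_neg_one)
  finally show ?thesis .
qed

lemma mult_powr_neg_root_less_one_iff:
  fixes x \<beta> :: real and m :: nat
  assumes "0 < x" "0 < \<beta>" "0 < m"
  shows "\<beta> * x powr (- 1 / real m) < 1 \<longleftrightarrow> \<beta> ^ m < x"
proof -
  have "\<beta> * x powr (- 1 / real m) < 1 \<longleftrightarrow> (\<beta> * x powr (- 1 / real m)) ^ m < 1"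
    using assms by (simp add: power_less_one_iff)
  also have "(\<beta> * x powr (- 1 / real m)) ^ m = \<beta> ^ m / x"
    unfolding power_mult_distrib powr_neg_root_power[OF assms(1,3)] by simp
  finally show ?thesis
    using assms(1) by simp
qed

lemma simplex_support_eq_initial_segment:
  assumes q: "q \<in> simplex K"
    and antimono: "\<And>i j. 1 \<le> i \<Longrightarrow> i \<le> j \<Longrightarrow> j \<le> K \<Longrightarrow> q j \<le> q i"
  shows "last_nonzero K q \<in> {1..K}"
    and "{k\<in>{1..K}. q k \<noteq> 0} = {1..last_nonzero K q}"
proof -
  define S where "S = {k\<in>{1..K}. q k \<noteq> 0}"
  define M where "M = last_nonzero K q"
  have "S \<noteq> {}"
  proof
    assume "S = {}"
    then have "(\<Sum>k=1..K. q k) = 0"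
      unfolding S_def by (intro sum.neutral) blast
    with q show False
      unfolding simplex_def by simp
  qed
  moreover have "finite S"
    unfolding S_def by simp
  ultimately have M_in: "M \<in> S" and M_max: "\<And>k. k \<in> S \<Longrightarrow> k \<le> M"
    unfolding M_def last_nonzero_def S_def[symmetric] by (simp_all add: Max_in)
  then show "M \<in> {1..K}"
    unfolding S_def by blast
  have "k \<in> S" if k: "k \<in> {1..M}" for k
  proof -
    have "0 \<le> q M" "q M \<noteq> 0"
      using M_in q unfolding S_def simplex_def by auto
    moreover have "q M \<le> q k"
      using antimono k M_in unfolding S_def by simp
    ultimately have "q k \<noteq> 0"
      by linarith
    then show ?thesis
      using M_in k unfolding S_def by simp
  qed
  moreover have "k \<in> {1..M}" if "k \<in> S" for k
    using M_max[OF that] that unfolding S_def by simp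
  ultimately show "S = {1..M}"
    by blast
qed

locale water_filling =
  fixes K N :: nat and p q :: "nat \<Rightarrow> real" and \<beta> :: real
  assumes N_ge_2: "N \<ge> 2"
    and p_simplex: "p \<in> simplex K"
    and p_pos: "\<forall>k\<in>{1..K}. p k > 0"
    and p_antimono: "\<forall>i j. 1 \<le> i \<longrightarrow> i \<le> j \<longrightarrow> j \<le> K \<longrightarrow> p j \<le> p i"
    and q_simplex: "q \<in> simplex K"
    and \<beta>_pos: "\<beta> > 0"
    and q_eq: "\<forall>k\<in>{1..K}. q k = max 0 (1 - \<beta> * p k powr (- 1 / (real N - 1)))"
begin

abbreviation r :: "nat \<Rightarrow> real" where
  "r k \<equiv> p k powr (- 1 / real (N - 1))"

abbreviation KN :: nat where
  "KN \<equiv> last_nonzero K q"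

lemma q_eq_max: "k \<in> {1..K} \<Longrightarrow> q k = max 0 (1 - \<beta> * r k)"
  using q_eq N_ge_2 by (simp add: of_nat_diff)

lemma r_mono: "1 \<le> i \<Longrightarrow> i \<le> j \<Longrightarrow> j \<le> K \<Longrightarrow> r i \<le> r j"
  using p_antimono p_pos N_ge_2 by (intro powr_mono2') auto

lemma r_pos:
  assumes "k \<in> {1..K}"
  shows "0 < r k"
proof -
  have "p k > 0"
    using p_pos assms by blast
  then show ?thesis
    by simp
qed

lemma q_antimono:
  assumes "1 \<le> i" "i \<le> j" "j \<le> K"
  shows "q j \<le> q i"
proof -
  have "\<beta> * r i \<le> \<beta> * r j"
    using r_mono[OF assms] \<beta>_pos by (simp add: mult_left_mono)
  then have "max 0 (1 - \<beta> * r j) \<le> max 0 (1 - \<beta> * r i)"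
    by (intro max.mono) simp_all
  with assms show ?thesis
    using q_eq_max[of i] q_eq_max[of j] by simp
qed

lemma KN_in_range: "KN \<in> {1..K}"
  by (rule simplex_support_eq_initial_segment(1)[OF q_simplex q_antimono])

lemma support_eq: "{k\<in>{1..K}. q k \<noteq> 0} = {1..KN}"
  by (rule simplex_support_eq_initial_segment(2)[OF q_simplex q_antimono])

lemma q_active:
  assumes "k \<in> {1..KN}"
  shows "q k = 1 - \<beta> * r k" and "\<beta> * r k < 1"
proof -
  have "k \<in> {k\<in>{1..K}. q k \<noteq> 0}"
    using assms by (simp only: support_eq)
  then have "q k \<noteq> 0" and "q k = max 0 (1 - \<beta> * r k)"
    using q_eq_max[of k] by auto
  then show "q k = 1 - \<beta> * r k" and "\<beta> * r k < 1"
    by (simp_all add: max_def split: if_splits)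
qed

lemma q_inactive:
  assumes "k \<in> {KN+1..K}"
  shows "q k = 0" and "1 \<le> \<beta> * r k"
proof -
  have "k \<notin> {1..KN}" and k: "k \<in> {1..K}"
    using assms by simp_all
  then have "k \<notin> {k\<in>{1..K}. q k \<noteq> 0}"
    unfolding support_eq by blast
  with k show "q k = 0"
    by simp
  with k show "1 \<le> \<beta> * r k"
    using q_eq_max[of k] by (simp add: max_def split: if_splits)
qed

lemma sum_split_at_KN: "(\<Sum>k=1..K. f k) = (\<Sum>k=1..KN. f k) + (\<Sum>k=KN+1..K. f k)"
proof -
  have d: "KN + (K - KN) = K"
    using KN_in_range by simp
  have "(\<Sum>k=1..KN + (K - KN). f k) = (\<Sum>k=1..KN. f k) + (\<Sum>k=KN+1..KN + (K - KN). f k)"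
    by (rule sum.ub_add_nat) simp
  then show ?thesis
    by (simp only: d)
qed

lemma beta_sum_r: "\<beta> * (\<Sum>k=1..KN. r k) = real KN - 1"
proof -
  have "1 = (\<Sum>k=1..K. q k)"
    using q_simplex unfolding simplex_def by simp
  also have "\<dots> = (\<Sum>k=1..KN. 1 - \<beta> * r k)"
    using sum_split_at_KN[of q] q_active(1) q_inactive(1) by simp
  also have "\<dots> = real KN - \<beta> * (\<Sum>k=1..KN. r k)"
    by (simp add: sum_subtractf sum_distrib_left)
  finally show ?thesis
    by simp
qed

lemma KN_ge_2: "KN \<ge> 2"
proof -
  have "(\<Sum>k=1..KN. r k) > 0"
    using KN_in_range r_pos by (intro sum_pos) auto
  with beta_sum_r \<beta>_pos have "real KN - 1 > 0"
    by (metis mult_pos_pos)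
  then show ?thesis
    by simp
qed

lemma loss_active_term:
  assumes k: "k \<in> {1..KN}"
  shows "p k * (1 - q k) ^ N = \<beta> ^ N * r k"
proof -
  have pk: "p k > 0"
    using k KN_in_range p_pos by auto
  have "r k ^ N = r k * r k ^ (N - 1)"
    using N_ge_2 by (cases N) simp_all
  then have "p k * (1 - q k) ^ N = \<beta> ^ N * r k * (p k * r k ^ (N - 1))"
    using q_active(1)[OF k] by (simp add: power_mult_distrib)
  also have "p k * r k ^ (N - 1) = 1"
    using pk N_ge_2 powr_neg_root_power[of "p k" "N - 1"] by simp
  finally show ?thesis
    by simp
qed

lemma loss_eq: "LN K N p q = (\<Sum>k=KN+1..K. p k) + (real KN - 1) * \<beta> ^ (N - 1)"
proof -
  have "LN K N p q = \<beta> ^ N * (\<Sum>k=1..KN. r k) + (\<Sum>k=KN+1..K. p k)"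
    unfolding LN_def sum_split_at_KN[of "\<lambda>k. p k * (1 - q k) ^ N"]
    using loss_active_term q_inactive(1) by (simp add: sum_distrib_left)
  also have "\<beta> ^ N = \<beta> ^ (N - 1) * \<beta>"
    using N_ge_2 by (metis Suc_diff_1 order_less_le_trans pos2 power_Suc2)
  finally show ?thesis
    using beta_sum_r by (simp add: mult.assoc)
qed

lemma beta_power_less: "\<beta> ^ (N - 1) < p KN"
proof -
  have "\<beta> * r KN < 1"
    using KN_in_range by (intro q_active(2)) simp
  then show ?thesis
    using mult_powr_neg_root_less_one_iff[of "p KN" \<beta> "N - 1"] KN_in_range p_pos \<beta>_pos N_ge_2
    by simp
qed

lemma beta_power_ge: "p (KN + 1) \<le> \<beta> ^ (N - 1)"
proof (cases "KN + 1 \<le> K")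
  case True
  then have "1 \<le> \<beta> * r (KN + 1)"
    by (intro q_inactive(2)) simp
  then have "\<not> \<beta> ^ (N - 1) < p (KN + 1)"
    using mult_powr_neg_root_less_one_iff[of "p (KN + 1)" \<beta> "N - 1"] True p_pos \<beta>_pos N_ge_2
    by simp
  then show ?thesis
    by simp
next
  case False
  then have "p (KN + 1) = 0"
    using p_simplex unfolding simplex_def by auto
  then show ?thesis
    using \<beta>_pos by simp
qed

end

theorem lemmaA8:
  fixes K N :: nat and p qs :: "nat \<Rightarrow> real" and \<beta> :: real
  assumes "N \<ge> 2"
    and "p \<in> simplex K"
    and "\<forall>k\<in>{1..K}. p k > 0"
    and "\<forall>i j. 1 \<le> i \<longrightarrow> i \<le> j \<longrightarrow> j \<le> K \<longrightarrow> p j \<le> p i"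
    and "qs \<in> simplex K"
    and "\<forall>q\<in>simplex K. LN K N p qs \<le> LN K N p q"
    and "\<beta> > 0"
    and "\<forall>k\<in>{1..K}. qs k = max 0 (1 - \<beta> * p k powr (- 1 / (real N - 1)))"
  shows "LN K N p p = (\<Sum>k=1..K. p k * (1 - p k) ^ N)
    \<and> LN K N p qs = (\<Sum>k=last_nonzero K qs + 1..K. p k)
                       + (real (last_nonzero K qs) - 1) * \<beta> ^ (N - 1)
    \<and> (\<Sum>k=last_nonzero K qs + 1..K. p k)
           + (real (last_nonzero K qs) - 1) * p (last_nonzero K qs + 1) \<le> LN K N p qs
    \<and> LN K N p qs < (\<Sum>k=last_nonzero K qs + 1..K. p k)
           + (real (last_nonzero K qs) - 1) * p (last_nonzero K qs)"
proof -
  interpret water_filling K N p qs \<beta>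
    using assms(1-5,7,8) by unfold_locales
  have "real KN - 1 > 0"
    using KN_ge_2 by simp
  then have "(real KN - 1) * p (KN + 1) \<le> (real KN - 1) * \<beta> ^ (N - 1)"
    and "(real KN - 1) * \<beta> ^ (N - 1) < (real KN - 1) * p KN"
    using beta_power_ge beta_power_less by simp_all
  then show ?thesis
    using loss_eq by (simp add: LN_def)
qed

end
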